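(* Let $N=(S,T,F,M_0,\ell)$ be a Petri net and $N'=(S',T',F',M'_0,\ell')$ a plain Petri net with $S'\subseteq S$ and $M'_0=M_0\restriction S'$. Suppose: (1) for every $t\in T$ with $\ell(t)\ne\tau$ there are $t'\in T'$ with $\ell'(t')=\ell(t)$ and a finite $G\in\mathbb N^T$ with $\ell(G)\equiv\emptyset$ such that $[\![t']\!]=[\![t+G]\!]$; (2) for any finite $G\in\mathbb Z^T$ with $\ell(G)\equiv\emptyset$, $M'\in\mathbb N^{S'}$, $U'\in\mathbb N^{T'}$ and $U\in\mathbb N^T$ with $\ell'(U')=\ell(U)$, $M'+{}^\bullet U'\in[M'_0\rangle_{N'}$ and $M:=M'+{}^\bullet U'+(M_0-M'_0)+[\![G]\!]-{}^\bullet U\in\mathbb N^S$ with $M+{}^\bullet U\in[M_0\rangle_N$, it holds that: (a) there is no infinite sequence $M\xrightarrow{\tau}M_1\xrightarrow{\tau}M_2\xrightarrow{\tau}\cdots$; (b) if $M'\xrightarrow{a}$ with $a\in\mathrm{Act}$ then $M\xrightarrow{a}$ or $M\xrightarrow{\tau}$; (c) if $M\xrightarrow{a}$ with $a\in\mathrm{Act}$ then $M'\xrightarrow{a}$. Then $N\approx^\Delta_{bSTb}N'$.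
   Context: Fix visible actions $\mathrm{Act}$ and $\tau\notin\mathrm{Act}$. A Petri net $(S,T,F,M_0,\ell)$ has disjoint $S,T$, $F:(S\times T)\cup(T\times S)\to\mathbb N$, $M_0\in\mathbb N^S$, $\ell:T\to\mathrm{Act}\cup\{\tau\}$. A signed multiset over $X$ is a function $X\to\mathbb Z$ (finite if finitely many nonzero values); operations are pointwise; signed multisets over different sets are identified when they agree on the common domain and are zero elsewhere (e.g. $M'\in\mathbb N^{S'}$ is viewed over $S$). ${}^\bullet x(y)=F(y,x)$, $x^\bullet(y)=F(x,y)$, extended additively to finite signed multisets $G$ of transitions; $[\![G]\!]=G^\bullet-{}^\bullet G$. $\ell(G)=\sum_tG(t)\{\ell(t)\}$, and $\ell(G)\equiv\emptyset$ means $\ell(G)(a)=0$ for every $a\in\mathrm{Act}$. For a finite nonempty multiset $G$, $M[G\rangle M'$ iff ${}^\bullet G\le M$ and $M'=M-{}^\bullet G+G^\bullet$; $[M_0\rangle_N$ is the set of reachable markings. For arbitrary markings, $M\xrightarrow{\alpha}$ means $M[t\rangle$ for some $t$ with label $\alpha$ (in the respective net), and $M\xrightarrow{\tau}M_1$ means $M[t\rangle M_1$ with $\ell(t)=\tau$. Plain: $\ell$ injective and never $\tau$. $N\approx^\Delta_{bSTb}N'$ (branching ST-bisimilarity with explicit divergence): there is a relation $\mathcal B$ between ST-markings $(M,U)\in\mathbb N^S\times T^*$ of $N$ and of $N'$, relating $(M_0,\varepsilon)$ and $(M'_0,\varepsilon)$, such that: if $\mathfrak M_1\mathcal B\mathfrak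 M_2$ and $\mathfrak M_1\xrightarrow{\alpha}\mathfrak M_1'$ then $\mathfrak M_2\Rightarrow\mathfrak M_2^\dagger\xrightarrow{(\alpha)}\mathfrak M_2'$ with $\mathfrak M_1\mathcal B\mathfrak M_2^\dagger$, $\mathfrak M_1'\mathcal B\mathfrak M_2'$ ($\Rightarrow$ reflexive transitive closure of $\xrightarrow{\tau}$; $\xrightarrow{(\alpha)}$ is $\xrightarrow{\alpha}$ or, if $\alpha=\tau$, equality), and symmetrically; and if $\mathfrak M_1\mathcal B\mathfrak M_2$ and an infinite $\tau$-sequence from $\mathfrak M_1$ has all states related to $\mathfrak M_2$, there is an infinite $\tau$-sequence from $\mathfrak M_2$ with all pairs of states related, and symmetrically. ST-transitions: $(M,U)\xrightarrow{a^+}(M-{}^\bullet t,Ut)$ iff $\ell(t)=a\in\mathrm{Act}$, $M[t\rangle$; $(M,U)\xrightarrow{a^{-n}}(M+t^\bullet,U^{-n})$ iff the $n$-th element $t$ of $U$ has label $a$ ($U^{-n}$: it removed); $(M,U)\xrightarrow{\tau}(M',U)$ iff $M[t\rangle M'$ with $\ell(t)=\tau$. *)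

theory Defs
  imports Main
begin

text \<open>Labelled Petri nets. Places have type 's, transitions type 't, visible actions type 'a;
  the label None represents tau. The flow function F is split into
  pre t s = F(s,t) and post t s = F(t,s).\<close>

record ('s, 't, 'a) pnet =
  places :: "'s set"
  trans  :: "'t set"
  pre    :: "'t \<Rightarrow> 's \<Rightarrow> nat"
  post   :: "'t \<Rightarrow> 's \<Rightarrow> nat"
  init   :: "'s \<Rightarrow> nat"
  lab    :: "'t \<Rightarrow> 'a option"

text \<open>Well-formedness: F is only defined on (S x T) and (T x S); M0 is a marking over S.\<close>
definition wf_net :: "('s, 't, 'a) pnet \<Rightarrow> bool" where
  "wf_net N \<longleftrightarrow>
     (\<forall>t\<in>trans N. \<forall>s. s \<notin> places N \<longrightarrow> pre N t s = 0 \<and> post N t s = 0) \<and>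
     (\<forall>s. s \<notin> places N \<longrightarrow> init N s = 0)"

definition plain :: "('s, 't, 'a) pnet \<Rightarrow> bool" where
  "plain N \<longleftrightarrow> inj_on (lab N) (trans N) \<and> (\<forall>t\<in>trans N. lab N t \<noteq> None)"

definition supp :: "('x \<Rightarrow> 'b::zero) \<Rightarrow> 'x set" where
  "supp G = {x. G x \<noteq> 0}"

definition fin_ms :: "('s, 't, 'a) pnet \<Rightarrow> ('t \<Rightarrow> 'b::zero) \<Rightarrow> bool" where
  "fin_ms N G \<longleftrightarrow> finite (supp G) \<and> supp G \<subseteq> trans N"

definition preZ :: "('s, 't, 'a) pnet \<Rightarrow> ('t \<Rightarrow> int) \<Rightarrow> 's \<Rightarrow> int" where
  "preZ N G s = (\<Sum>t\<in>supp G. G t * int (pre N t s))"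

definition postZ :: "('s, 't, 'a) pnet \<Rightarrow> ('t \<Rightarrow> int) \<Rightarrow> 's \<Rightarrow> int" where
  "postZ N G s = (\<Sum>t\<in>supp G. G t * int (post N t s))"

definition effZ :: "('s, 't, 'a) pnet \<Rightarrow> ('t \<Rightarrow> int) \<Rightarrow> 's \<Rightarrow> int" where
  "effZ N G s = postZ N G s - preZ N G s"

definition preN :: "('s, 't, 'a) pnet \<Rightarrow> ('t \<Rightarrow> nat) \<Rightarrow> 's \<Rightarrow> nat" where
  "preN N G s = (\<Sum>t\<in>supp G. G t * pre N t s)"

definition postN :: "('s, 't, 'a) pnet \<Rightarrow> ('t \<Rightarrow> nat) \<Rightarrow> 's \<Rightarrow> nat" where
  "postN N G s = (\<Sum>t\<in>supp G. G t * post N t s)"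

definition labcnt :: "('s, 't, 'a) pnet \<Rightarrow> ('t \<Rightarrow> int) \<Rightarrow> 'a option \<Rightarrow> int" where
  "labcnt N G al = (\<Sum>t\<in>{t\<in>supp G. lab N t = al}. G t)"

text \<open>l(G) is equivalent to the empty multiset: no visible action occurs with nonzero multiplicity.\<close>
definition lab_empty :: "('s, 't, 'a) pnet \<Rightarrow> ('t \<Rightarrow> int) \<Rightarrow> bool" where
  "lab_empty N G \<longleftrightarrow> (\<forall>a. labcnt N G (Some a) = 0)"

definition fire :: "('s, 't, 'a) pnet \<Rightarrow> ('s \<Rightarrow> nat) \<Rightarrow> ('t \<Rightarrow> nat) \<Rightarrow> ('s \<Rightarrow> nat) \<Rightarrow> bool" where
  "fire N M G M' \<longleftrightarrow> fin_ms N G \<and> supp G \<noteq> {} \<and> preN N G \<le> M \<and>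
     M' = (\<lambda>s. M s - preN N G s + postN N G s)"

definition reach :: "('s, 't, 'a) pnet \<Rightarrow> ('s \<Rightarrow> nat) set" where
  "reach N = {M. (\<lambda>M1 M2. \<exists>G. fire N M1 G M2)\<^sup>*\<^sup>* (init N) M}"

definition enabled_lab :: "('s, 't, 'a) pnet \<Rightarrow> ('s \<Rightarrow> nat) \<Rightarrow> 'a option \<Rightarrow> bool" where
  "enabled_lab N M al \<longleftrightarrow> (\<exists>t\<in>trans N. lab N t = al \<and> pre N t \<le> M)"

definition tau_step :: "('s, 't, 'a) pnet \<Rightarrow> ('s \<Rightarrow> nat) \<Rightarrow> ('s \<Rightarrow> nat) \<Rightarrow> bool" where
  "tau_step N M M' \<longleftrightarrow> (\<exists>t\<in>trans N. lab N t = None \<and> pre N t \<le> M \<and>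
      M' = (\<lambda>s. M s - pre N t s + post N t s))"

text \<open>ST-semantics. ST-labels: a^+, a^{-n} (n counted from 1), tau.\<close>
datatype 'a stlab = Start 'a | Fin 'a nat | Tau

type_synonym ('s, 't) stmark = "('s \<Rightarrow> nat) \<times> 't list"

definition st_step :: "('s, 't, 'a) pnet \<Rightarrow> ('s, 't) stmark \<Rightarrow> 'a stlab \<Rightarrow> ('s, 't) stmark \<Rightarrow> bool" where
  "st_step N m al m' \<longleftrightarrow> (case al of
      Start a \<Rightarrow> (\<exists>t\<in>trans N. lab N t = Some a \<and> pre N t \<le> fst m \<and>
                   m' = ((\<lambda>s. fst m s - pre N t s), snd m @ [t]))
    | Fin a n \<Rightarrow> 1 \<le> n \<and> n \<le> length (snd m) \<and> lab N (snd m ! (n - 1)) = Some a \<and>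
                   m' = ((\<lambda>s. fst m s + post N (snd m ! (n - 1)) s),
                         take (n - 1) (snd m) @ drop n (snd m))
    | Tau \<Rightarrow> tau_step N (fst m) (fst m') \<and> snd m' = snd m)"

definition stmarks :: "('s, 't, 'a) pnet \<Rightarrow> ('s, 't) stmark set" where
  "stmarks N = {(M, U). (\<forall>s. s \<notin> places N \<longrightarrow> M s = 0) \<and> set U \<subseteq> trans N}"

text \<open>One direction of the transfer and divergence conditions of a branching bisimulation
  with explicit divergence, for labelled transition relations step1 and step2 with silent label tau.\<close>
definition bb_half :: "('x \<Rightarrow> 'l \<Rightarrow> 'x \<Rightarrow> bool) \<Rightarrow> ('y \<Rightarrow> 'l \<Rightarrow> 'y \<Rightarrow> bool) \<Rightarrow> 'l \<Rightarrow>
                       ('x \<times> 'y) set \<Rightarrow> bool" where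
  "bb_half step1 step2 tau B \<longleftrightarrow>
     (\<forall>m1 m2 al m1'. (m1, m2) \<in> B \<and> step1 m1 al m1' \<longrightarrow>
        (\<exists>m2d m2'. (\<lambda>x y. step2 x tau y)\<^sup>*\<^sup>* m2 m2d \<and>
           (step2 m2d al m2' \<or> (al = tau \<and> m2' = m2d)) \<and>
           (m1, m2d) \<in> B \<and> (m1', m2') \<in> B)) \<and>
     (\<forall>m1 m2 f. (m1, m2) \<in> B \<and> f 0 = m1 \<and> (\<forall>i. step1 (f i) tau (f (Suc i))) \<and>
        (\<forall>i. (f i, m2) \<in> B) \<longrightarrow>
        (\<exists>g. g 0 = m2 \<and> (\<forall>i. step2 (g i) tau (g (Suc i))) \<and> (\<forall>i j. (f i, g j) \<in> B)))"

definition bSTb_div :: "('s, 't, 'a) pnet \<Rightarrow> ('s2, 'u, 'a) pnet \<Rightarrow> bool" where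
  "bSTb_div N N' \<longleftrightarrow> (\<exists>B. B \<subseteq> stmarks N \<times> stmarks N' \<and>
      ((init N, []), (init N', [])) \<in> B \<and>
      bb_half (st_step N) (st_step N') Tau B \<and>
      bb_half (st_step N') (st_step N) Tau (B\<inverse>))"

end

theory Submission
  imports Defs
begin

text \<open>
  An ST-marking \<open>(M, U)\<close> of \<open>N\<close> is coupled with \<open>(M', U')\<close> of \<open>N'\<close> when the running
  transitions \<open>U\<close> and \<open>U'\<close> carry the same labels in the same order, the markings
  \<open>M + \<^sup>\<bullet>U\<close> and \<open>M' + \<^sup>\<bullet>U'\<close> are reachable, and
  \<open>M = M' + \<^sup>\<bullet>U' + (M\<^sub>0 - M'\<^sub>0) + [[G]] - \<^sup>\<bullet>U\<close> for some finite \<open>G\<close> with \<open>\<ell>(G) \<equiv> \<emptyset>\<close>.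
  A silent step of \<open>N\<close> is absorbed into \<open>G\<close>; starting a transition only moves its preset
  into the running multiset; finishing \<open>t\<close> in \<open>N\<close> together with the equally labelled \<open>t'\<close>
  (unique since \<open>N'\<close> is plain) keeps the balance after subtracting from \<open>G\<close> the invisible
  \<open>G\<^sub>0\<close> with \<open>[[t']] = [[t + G\<^sub>0]]\<close> given by (1). Hence (2) applies to every coupled pair:
  (c) lets \<open>N'\<close> answer visible starts of \<open>N\<close> directly, while by (b) and (a) \<open>N\<close> answers a
  start of \<open>N'\<close> after finitely many silent steps. Divergence never has to be matched, since
  coupled markings of \<open>N\<close> do not diverge and \<open>N'\<close> has no silent transitions.
\<close>

lemma supp_count_list [simp]: "supp (count_list U) = set U"
  by (auto simp: supp_def count_list_0_iff)

lemma supp_int_count_list [simp]: "supp (\<lambda>x. int (count_list U x)) = set U"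
  by (auto simp: supp_def count_list_0_iff)

lemma fin_ms_count_list: "fin_ms N (count_list U) \<longleftrightarrow> set U \<subseteq> trans N"
  by (simp add: fin_ms_def)

lemma preN_count_list: "preN N (count_list U) s = (\<Sum>t\<leftarrow>U. pre N t s)"
  unfolding preN_def supp_count_list sum_list_map_eq_sum_count ..

lemma preN_count_list_remove_nth:
  assumes "k < length U"
  shows "preN N (count_list U) s = preN N (count_list (take k U @ drop (Suc k) U)) s + pre N (U ! k) s"
proof -
  have "U = take k U @ U ! k # drop (Suc k) U"
    using assms by (simp add: id_take_nth_drop)
  then have "(\<Sum>t\<leftarrow>U. pre N t s) = (\<Sum>t\<leftarrow>take k U @ U ! k # drop (Suc k) U. pre N t s)"
    by simp
  then show ?thesis
    by (simp add: preN_count_list)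
qed

lemma pre_le_preN_count_list: "t \<in> set U \<Longrightarrow> pre N t s \<le> preN N (count_list U) s"
  unfolding preN_count_list by (induction U) auto

lemma effZ_eq_sum:
  assumes "finite A" "supp G \<subseteq> A"
  shows "effZ N G s = (\<Sum>t\<in>A. G t * (int (post N t s) - int (pre N t s)))"
proof -
  have "postZ N G s = (\<Sum>t\<in>A. G t * int (post N t s))" "preZ N G s = (\<Sum>t\<in>A. G t * int (pre N t s))"
    unfolding postZ_def preZ_def
    by (rule sum.mono_neutral_left; use assms in \<open>auto simp: supp_def\<close>)+
  then show ?thesis
    by (simp add: effZ_def sum_subtractf[symmetric] right_diff_distrib)
qed

lemma labcnt_eq_sum:
  assumes "finite A" "supp G \<subseteq> A"
  shows "labcnt N G al = (\<Sum>t\<in>A. if lab N t = al then G t else 0)"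
proof -
  have "finite (supp G)"
    using assms finite_subset by blast
  then have "labcnt N G al = (\<Sum>t\<in>supp G. if lab N t = al then G t else 0)"
    unfolding labcnt_def by (simp add: sum.inter_filter)
  also have "\<dots> = (\<Sum>t\<in>A. if lab N t = al then G t else 0)"
    by (rule sum.mono_neutral_left) (use assms in \<open>auto simp: supp_def\<close>)
  finally show ?thesis .
qed

lemma count_list_map: "count_list (map f U) a = (\<Sum>t\<leftarrow>U. if f t = a then 1 else 0)"
  by (induction U) auto

lemma labcnt_count_list: "labcnt N (\<lambda>x. int (count_list U x)) al = int (count_list (map (lab N) U) al)"
proof -
  have "labcnt N (\<lambda>x. int (count_list U x)) al =
        (\<Sum>t\<in>set U. if lab N t = al then int (count_list U t) else 0)"
    by (rule labcnt_eq_sum) auto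
  also have "\<dots> = int (\<Sum>t\<in>set U. count_list U t * (if lab N t = al then 1 else 0))"
    by (simp add: if_distrib cong: if_cong)
  also have "\<dots> = int (count_list (map (lab N) U) al)"
    unfolding count_list_map sum_list_map_eq_sum_count by simp
  finally show ?thesis .
qed

lemma supp_add: "supp (\<lambda>x. G x + H x :: int) \<subseteq> supp G \<union> supp H"
  by (auto simp: supp_def)

lemma supp_diff: "supp (\<lambda>x. G x - H x :: int) \<subseteq> supp G \<union> supp H"
  by (auto simp: supp_def)

lemma supp_indicator: "supp (\<lambda>x. if x = t then 1 else 0 :: int) = {t}"
  by (auto simp: supp_def)

lemma effZ_add:
  assumes "finite (supp G)" "finite (supp H)"
  shows "effZ N (\<lambda>x. G x + H x) s = effZ N G s + effZ N H s"
proof -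
  have A: "finite (supp G \<union> supp H)"
    using assms by simp
  show ?thesis
    using effZ_eq_sum[OF A supp_add, of N s] effZ_eq_sum[OF A, of G N s] effZ_eq_sum[OF A, of H N s]
    by (simp add: sum.distrib distrib_right)
qed

lemma effZ_diff:
  assumes "finite (supp G)" "finite (supp H)"
  shows "effZ N (\<lambda>x. G x - H x) s = effZ N G s - effZ N H s"
proof -
  have A: "finite (supp G \<union> supp H)"
    using assms by simp
  show ?thesis
    using effZ_eq_sum[OF A supp_diff, of N s] effZ_eq_sum[OF A, of G N s] effZ_eq_sum[OF A, of H N s]
    by (simp add: sum_subtractf left_diff_distrib)
qed

lemma effZ_indicator: "effZ N (\<lambda>x. if x = t then 1 else 0) s = int (post N t s) - int (pre N t s)"
  using effZ_eq_sum[of "{t}" "\<lambda>x. if x = t then 1 else 0" N s] by (simp add: supp_indicator)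

lemma labcnt_add:
  assumes "finite (supp G)" "finite (supp H)"
  shows "labcnt N (\<lambda>x. G x + H x) al = labcnt N G al + labcnt N H al"
proof -
  have A: "finite (supp G \<union> supp H)"
    using assms by simp
  show ?thesis
    using labcnt_eq_sum[OF A supp_add, of N al] labcnt_eq_sum[OF A, of G N al] labcnt_eq_sum[OF A, of H N al]
    by (simp add: sum.distrib[symmetric] if_distrib cong: if_cong)
qed

lemma labcnt_diff:
  assumes "finite (supp G)" "finite (supp H)"
  shows "labcnt N (\<lambda>x. G x - H x) al = labcnt N G al - labcnt N H al"
proof -
  have A: "finite (supp G \<union> supp H)"
    using assms by simp
  show ?thesis
    using labcnt_eq_sum[OF A supp_diff, of N al] labcnt_eq_sum[OF A, of G N al] labcnt_eq_sum[OF A, of H N al]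
    by (simp add: sum_subtractf[symmetric]) (rule sum.cong, auto)
qed

lemma labcnt_indicator: "labcnt N (\<lambda>x. if x = t then 1 else 0) al = (if lab N t = al then 1 else 0)"
  using labcnt_eq_sum[of "{t}" "\<lambda>x. if x = t then 1 else 0" N al] by (simp add: supp_indicator)

lemma fin_ms_add: "fin_ms N G \<Longrightarrow> fin_ms N H \<Longrightarrow> fin_ms N (\<lambda>x. G x + H x :: int)"
  unfolding fin_ms_def using supp_add[of G H] by (meson finite_Un finite_subset le_sup_iff subset_trans)

lemma fin_ms_diff: "fin_ms N G \<Longrightarrow> fin_ms N H \<Longrightarrow> fin_ms N (\<lambda>x. G x - H x :: int)"
  unfolding fin_ms_def using supp_diff[of G H] by (meson finite_Un finite_subset le_sup_iff subset_trans)

lemma fin_ms_indicator: "t \<in> trans N \<Longrightarrow> fin_ms N (\<lambda>x. if x = t then 1 else 0 :: int)"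
  by (simp add: fin_ms_def supp_indicator)

lemma fin_ms_int: "fin_ms N (\<lambda>x. int (G x)) \<longleftrightarrow> fin_ms N G"
  by (simp add: fin_ms_def supp_def)

lemma init_in_reach: "init N \<in> reach N"
  by (simp add: reach_def)

lemma reach_fire_transition:
  assumes "M \<in> reach N" "t \<in> trans N" "pre N t \<le> M"
    and "\<And>s. M1 s + pre N t s = M s + post N t s"
  shows "M1 \<in> reach N"
proof -
  let ?G = "\<lambda>x. if x = t then 1 else 0 :: nat"
  have supp: "supp ?G = {t}"
    by (auto simp: supp_def)
  have "preN N ?G = pre N t" "postN N ?G = post N t"
    by (simp_all add: fun_eq_iff preN_def postN_def supp)
  moreover have "M1 = (\<lambda>s. M s - pre N t s + post N t s)"
  proof
    fix s
    have "pre N t s \<le> M s"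
      using assms(3) by (simp add: le_fun_def)
    then show "M1 s = M s - pre N t s + post N t s"
      using assms(4)[of s] by linarith
  qed
  ultimately have "fire N M ?G M1"
    using assms(2,3) by (simp add: fire_def fin_ms_def supp)
  with assms(1) show ?thesis
    unfolding reach_def by (auto intro: rtranclp.rtrancl_into_rtrancl)
qed

lemma plain_no_tau_step: "plain N \<Longrightarrow> \<not> tau_step N M M1"
  by (auto simp: plain_def tau_step_def)

lemma reaches_goal_if_no_divergence:
  assumes "x \<in> X"
    and closed: "\<And>x y. x \<in> X \<Longrightarrow> r x y \<Longrightarrow> y \<in> X"
    and progress: "\<And>x. x \<in> X \<Longrightarrow> P x \<or> (\<exists>y. r x y)"
    and no_divergence: "\<And>x. x \<in> X \<Longrightarrow> \<not> (\<exists>f. f 0 = x \<and> (\<forall>i. r (f i) (f (Suc i))))"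
  shows "\<exists>y. r\<^sup>*\<^sup>* x y \<and> y \<in> X \<and> P y"
proof -
  let ?R = "{(y, x). x \<in> X \<and> r x y}"
  have "wf ?R"
    unfolding wf_iff_no_infinite_down_chain
  proof
    assume "\<exists>f. \<forall>i. (f (Suc i), f i) \<in> ?R"
    then obtain f where "\<forall>i. f i \<in> X \<and> r (f i) (f (Suc i))"
      by auto
    then show False
      using no_divergence by blast
  qed
  then show ?thesis
    using \<open>x \<in> X\<close>
  proof (induction x rule: wf_induct_rule)
    case (less x)
    from progress[OF less.prems] show ?case
    proof
      assume "\<exists>y. r x y"
      then obtain y where "r x y" ..
      with less.prems closed obtain z where "r\<^sup>*\<^sup>* y z" "z \<in> X" "P z"
        using less.IH by blast
      with \<open>r x y\<close> show ?case
        by (blast intro: converse_rtranclp_into_rtranclp)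
    qed (use less.prems in blast)
  qed
qed

text \<open>\<open>visible_effects_matched\<close> is condition (1); \<open>consistent_markings\<close> is the premise of
  condition (2), \<open>tau_divergent\<close> negates its conclusion (a), and \<open>visible_enabling_matches\<close>
  is (b) together with (c).\<close>

definition marking_balance ::
    "('s, 't, 'a) pnet \<Rightarrow> ('s, 'u, 'a) pnet \<Rightarrow> ('t \<Rightarrow> int) \<Rightarrow>
     ('s \<Rightarrow> nat) \<Rightarrow> ('t \<Rightarrow> nat) \<Rightarrow> ('s \<Rightarrow> nat) \<Rightarrow> ('u \<Rightarrow> nat) \<Rightarrow> bool" where
  "marking_balance N N' G M U M' U' \<longleftrightarrow>
     (\<forall>s. int (M s) = int (M' s) + int (preN N' U' s) + (int (init N s) - int (init N' s))
                      + effZ N G s - int (preN N U s))"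

definition consistent_markings ::
    "('s, 't, 'a) pnet \<Rightarrow> ('s, 'u, 'a) pnet \<Rightarrow> ('t \<Rightarrow> int) \<Rightarrow>
     ('s \<Rightarrow> nat) \<Rightarrow> ('t \<Rightarrow> nat) \<Rightarrow> ('s \<Rightarrow> nat) \<Rightarrow> ('u \<Rightarrow> nat) \<Rightarrow> bool" where
  "consistent_markings N N' G M U M' U' \<longleftrightarrow>
     fin_ms N G \<and> lab_empty N G \<and>
     (\<forall>s. s \<notin> places N' \<longrightarrow> M' s = 0) \<and> fin_ms N' U' \<and> fin_ms N U \<and>
     (\<forall>al. labcnt N' (\<lambda>x. int (U' x)) al = labcnt N (\<lambda>x. int (U x)) al) \<and>
     (\<lambda>s. M' s + preN N' U' s) \<in> reach N' \<and>
     marking_balance N N' G M U M' U' \<and>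
     (\<lambda>s. M s + preN N U s) \<in> reach N"

definition tau_divergent :: "('s, 't, 'a) pnet \<Rightarrow> ('s \<Rightarrow> nat) \<Rightarrow> bool" where
  "tau_divergent N M \<longleftrightarrow> (\<exists>f. f 0 = M \<and> (\<forall>i. tau_step N (f i) (f (Suc i))))"

definition visible_enabling_matches :: "('s, 't, 'a) pnet \<Rightarrow> ('s, 'u, 'a) pnet \<Rightarrow> ('s \<Rightarrow> nat) \<Rightarrow> ('s \<Rightarrow> nat) \<Rightarrow> bool" where
  "visible_enabling_matches N N' M M' \<longleftrightarrow>
     (\<forall>a. enabled_lab N' M' (Some a) \<longrightarrow> enabled_lab N M (Some a) \<or> enabled_lab N M None) \<and>
     (\<forall>a. enabled_lab N M (Some a) \<longrightarrow> enabled_lab N' M' (Some a))"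

definition visible_effects_matched :: "('s, 't, 'a) pnet \<Rightarrow> ('s, 'u, 'a) pnet \<Rightarrow> bool" where
  "visible_effects_matched N N' \<longleftrightarrow>
     (\<forall>t\<in>trans N. lab N t \<noteq> None \<longrightarrow>
       (\<exists>t'\<in>trans N'. lab N' t' = lab N t \<and>
          (\<exists>G :: 't \<Rightarrow> nat. fin_ms N G \<and> lab_empty N (\<lambda>x. int (G x)) \<and>
             (\<lambda>s. int (post N' t' s) - int (pre N' t' s)) =
             effZ N (\<lambda>x. int (G x) + (if x = t then 1 else 0)))))"

definition st_coupling :: "('s, 't, 'a) pnet \<Rightarrow> ('s, 'u, 'a) pnet \<Rightarrow> (('s, 't) stmark \<times> ('s, 'u) stmark) set" where
  "st_coupling N N' = {((M, U), (M', U')). (M, U) \<in> stmarks N \<and> (M', U') \<in> stmarks N' \<and>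
     map (lab N) U = map (lab N') U' \<and>
     (\<lambda>s. M s + preN N (count_list U) s) \<in> reach N \<and>
     (\<lambda>s. M' s + preN N' (count_list U') s) \<in> reach N' \<and>
     (\<exists>G. fin_ms N G \<and> lab_empty N G \<and> marking_balance N N' G M (count_list U) M' (count_list U'))}"

lemma st_coupling_consistent:
  assumes "((M, U), (M', U')) \<in> st_coupling N N'"
  obtains G where "consistent_markings N N' G M (count_list U) M' (count_list U')"
  using assms
  by (auto simp: st_coupling_def consistent_markings_def stmarks_def fin_ms_count_list labcnt_count_list)

lemma st_coupling_init:
  assumes "wf_net N" "wf_net N'"
  shows "((init N, []), (init N', [])) \<in> st_coupling N N'"
proof -
  have "marking_balance N N' (\<lambda>x. 0) (init N) (count_list []) (init N') (count_list [])"
    by (simp add: marking_balance_def preN_count_list effZ_def postZ_def preZ_def supp_def)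
  moreover have "fin_ms N (\<lambda>x. 0 :: int)" "lab_empty N (\<lambda>x. 0 :: int)"
    by (simp_all add: fin_ms_def lab_empty_def labcnt_def supp_def)
  ultimately show ?thesis
    using assms
    by (auto simp: st_coupling_def stmarks_def wf_net_def preN_count_list init_in_reach)
qed

lemma st_coupling_tau:
  assumes wf: "wf_net N" and coupled: "((M, U), (M', U')) \<in> st_coupling N N'"
    and step: "tau_step N M M1"
  shows "((M1, U), (M', U')) \<in> st_coupling N N'"
proof -
  obtain t where t: "t \<in> trans N" "lab N t = None" "pre N t \<le> M"
    and M1: "M1 = (\<lambda>s. M s - pre N t s + post N t s)"
    using step unfolding tau_step_def by blast
  from coupled obtain G where G: "fin_ms N G" "lab_empty N G"
      "marking_balance N N' G M (count_list U) M' (count_list U')"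
    and reach: "(\<lambda>s. M s + preN N (count_list U) s) \<in> reach N"
    unfolding st_coupling_def by auto
  let ?t = "\<lambda>x. if x = t then 1 else 0 :: int"
  have fin: "finite (supp G)" "finite (supp ?t)"
    using G(1) by (simp_all add: fin_ms_def supp_indicator)
  have pre_le: "pre N t s \<le> M s" for s
    using t(3) by (simp add: le_fun_def)
  have "fin_ms N (\<lambda>x. G x + ?t x)"
    using fin_ms_add[OF G(1) fin_ms_indicator[OF t(1)]] .
  moreover have "lab_empty N (\<lambda>x. G x + ?t x)"
    using G(2) t(2) by (simp add: lab_empty_def labcnt_add[OF fin] labcnt_indicator)
  moreover have "marking_balance N N' (\<lambda>x. G x + ?t x) M1 (count_list U) M' (count_list U')"
    unfolding marking_balance_def
  proof
    fix s
    have "int (M1 s) = int (M s) - int (pre N t s) + int (post N t s)"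
      using pre_le[of s] by (simp add: M1)
    then show "int (M1 s) = int (M' s) + int (preN N' (count_list U') s) + (int (init N s) - int (init N' s))
                            + effZ N (\<lambda>x. G x + ?t x) s - int (preN N (count_list U) s)"
      using G(3) by (simp add: marking_balance_def effZ_add[OF fin] effZ_indicator)
  qed
  moreover have "(\<lambda>s. M1 s + preN N (count_list U) s) \<in> reach N"
    by (rule reach_fire_transition[OF reach t(1)])
       (use pre_le in \<open>auto simp: le_fun_def M1 intro: trans_le_add1 le_add_diff_inverse2\<close>)
  moreover have "(M1, U) \<in> stmarks N"
    using coupled wf t(1) by (auto simp: st_coupling_def stmarks_def wf_net_def M1)
  ultimately show ?thesis
    using coupled unfolding st_coupling_def by blast
qed

lemma st_coupling_start:
  assumes coupled: "((M, U), (M', U')) \<in> st_coupling N N'"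
    and t: "t \<in> trans N" "pre N t \<le> M"
    and t': "t' \<in> trans N'" "pre N' t' \<le> M'" "lab N' t' = lab N t"
  shows "(((\<lambda>s. M s - pre N t s), U @ [t]), ((\<lambda>s. M' s - pre N' t' s), U' @ [t'])) \<in> st_coupling N N'"
proof -
  from coupled obtain G where G: "fin_ms N G" "lab_empty N G"
      "marking_balance N N' G M (count_list U) M' (count_list U')"
    unfolding st_coupling_def by auto
  have pre_le: "pre N t s \<le> M s" "pre N' t' s \<le> M' s" for s
    using t(2) t'(2) by (simp_all add: le_fun_def)
  have "(\<lambda>s. M s - pre N t s + preN N (count_list (U @ [t])) s) = (\<lambda>s. M s + preN N (count_list U) s)"
       "(\<lambda>s. M' s - pre N' t' s + preN N' (count_list (U' @ [t'])) s) = (\<lambda>s. M' s + preN N' (count_list U') s)"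
    using pre_le by (simp_all add: fun_eq_iff preN_count_list)
  moreover have "marking_balance N N' G (\<lambda>s. M s - pre N t s) (count_list (U @ [t]))
                   (\<lambda>s. M' s - pre N' t' s) (count_list (U' @ [t']))"
    using G(3) pre_le by (simp add: marking_balance_def preN_count_list)
  ultimately show ?thesis
    using coupled G(1,2) t(1) t'(1,3) by (auto simp: st_coupling_def stmarks_def)
qed

lemma st_coupling_subset: "st_coupling N N' \<subseteq> stmarks N \<times> stmarks N'"
  by (auto simp: st_coupling_def)

lemma st_coupling_labels: "((M, U), (M', U')) \<in> st_coupling N N' \<Longrightarrow> map (lab N) U = map (lab N') U'"
  by (simp add: st_coupling_def)

lemma effect_of_matching_transition:
  assumes "plain N'" "visible_effects_matched N N'"
    and "t \<in> trans N" "t' \<in> trans N'" "lab N' t' = lab N t"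
  obtains G0 where "fin_ms N G0" "lab_empty N (\<lambda>x. int (G0 x))"
    "\<And>s. int (post N' t' s) - int (pre N' t' s) =
          effZ N (\<lambda>x. int (G0 x)) s + int (post N t s) - int (pre N t s)"
proof -
  have "lab N t \<noteq> None"
    using assms(1,4,5) unfolding plain_def by metis
  then obtain t'' G0 where t'': "t'' \<in> trans N'" "lab N' t'' = lab N t"
    and G0: "fin_ms N G0" "lab_empty N (\<lambda>x. int (G0 x))"
      "(\<lambda>s. int (post N' t'' s) - int (pre N' t'' s)) = effZ N (\<lambda>x. int (G0 x) + (if x = t then 1 else 0))"
    using assms(2,3) unfolding visible_effects_matched_def by blast
  have "t'' = t'"
    using assms(1,4,5) t'' unfolding plain_def inj_on_def by metis
  moreover have "finite (supp (\<lambda>x. int (G0 x)))"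
    using G0(1) by (simp add: fin_ms_def supp_def)
  ultimately show ?thesis
    using that G0 fun_cong[OF G0(3)]
    by (simp add: effZ_add supp_indicator effZ_indicator)
qed

lemma reach_finish_nth:
  assumes "(\<lambda>s. M s + preN N (count_list U) s) \<in> reach N" "set U \<subseteq> trans N" "k < length U"
  shows "(\<lambda>s. M s + post N (U ! k) s + preN N (count_list (take k U @ drop (Suc k) U)) s) \<in> reach N"
proof (rule reach_fire_transition[OF assms(1)])
  show "U ! k \<in> trans N"
    using assms(2,3) nth_mem by blast
  show "pre N (U ! k) \<le> (\<lambda>s. M s + preN N (count_list U) s)"
    using pre_le_preN_count_list[OF nth_mem[OF assms(3)], of N] by (simp add: le_fun_def trans_le_add2)
qed (simp add: preN_count_list_remove_nth[OF assms(3)])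

lemma stmarks_finish_nth:
  assumes "wf_net N" "(M, U) \<in> stmarks N" "k < length U"
  shows "((\<lambda>s. M s + post N (U ! k) s), take k U @ drop (Suc k) U) \<in> stmarks N"
proof -
  have "U ! k \<in> trans N"
    using assms(2,3) nth_mem by (fastforce simp: stmarks_def)
  then show ?thesis
    using assms(1,2) by (auto simp: stmarks_def wf_net_def dest: in_set_takeD in_set_dropD)
qed

lemma st_coupling_finish:
  assumes wf: "wf_net N" "wf_net N'" and plain: "plain N'" and vis: "visible_effects_matched N N'"
    and coupled: "((M, U), (M', U')) \<in> st_coupling N N'" and k: "k < length U"
  shows "(((\<lambda>s. M s + post N (U ! k) s), take k U @ drop (Suc k) U),
          ((\<lambda>s. M' s + post N' (U' ! k) s), take k U' @ drop (Suc k) U')) \<in> st_coupling N N'"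
proof -
  from coupled obtain G where G: "fin_ms N G" "lab_empty N G"
      "marking_balance N N' G M (count_list U) M' (count_list U')"
    and st: "(M, U) \<in> stmarks N" "(M', U') \<in> stmarks N'" and labs: "map (lab N) U = map (lab N') U'"
    and reach: "(\<lambda>s. M s + preN N (count_list U) s) \<in> reach N"
      "(\<lambda>s. M' s + preN N' (count_list U') s) \<in> reach N'"
    unfolding st_coupling_def by auto
  define t t' V V' where "t = U ! k" and "t' = U' ! k"
    and "V = take k U @ drop (Suc k) U" and "V' = take k U' @ drop (Suc k) U'"
  have k': "k < length U'"
    using k labs by (metis length_map)
  have tT: "t \<in> trans N" and tT': "t' \<in> trans N'"
    using st k k' by (auto simp: stmarks_def t_def t'_def)
  have "lab N' t' = lab N t"
    using labs k k' by (metis nth_map t_def t'_def)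
  then obtain G0 where G0: "fin_ms N G0" "lab_empty N (\<lambda>x. int (G0 x))"
    and eff: "\<And>s. int (post N' t' s) - int (pre N' t' s) =
                   effZ N (\<lambda>x. int (G0 x)) s + int (post N t s) - int (pre N t s)"
    using effect_of_matching_transition[OF plain vis tT tT'] by blast
  let ?G1 = "\<lambda>x. G x - int (G0 x)"
  have fin: "finite (supp G)" "finite (supp (\<lambda>x. int (G0 x)))"
    using G(1) G0(1) by (simp_all add: fin_ms_def supp_def)
  have remove: "\<And>s. preN N (count_list U) s = preN N (count_list V) s + pre N t s"
               "\<And>s. preN N' (count_list U') s = preN N' (count_list V') s + pre N' t' s"
    using preN_count_list_remove_nth k k' by (simp_all add: t_def t'_def V_def V'_def)
  \<comment> \<open>\<open>t'\<close> has the effect of \<open>t + G0\<close>, so finishing both keeps the balance once \<open>G0\<close> is taken out of \<open>G\<close>\<close>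
  have "fin_ms N ?G1"
    using fin_ms_diff[OF G(1)] G0(1) by (simp add: fin_ms_int)
  moreover have "lab_empty N ?G1"
    using G(2) G0(2) by (simp add: lab_empty_def labcnt_diff[OF fin])
  moreover have "marking_balance N N' ?G1 (\<lambda>s. M s + post N t s) (count_list V)
                   (\<lambda>s. M' s + post N' t' s) (count_list V')"
    unfolding marking_balance_def
  proof
    fix s
    show "int (M s + post N t s) = int (M' s + post N' t' s) + int (preN N' (count_list V') s)
            + (int (init N s) - int (init N' s)) + effZ N ?G1 s - int (preN N (count_list V) s)"
      using G(3) eff[of s] remove[of s] by (simp add: marking_balance_def effZ_diff[OF fin])
  qed
  moreover have "(\<lambda>s. M s + post N t s + preN N (count_list V) s) \<in> reach N"
    "(\<lambda>s. M' s + post N' t' s + preN N' (count_list V') s) \<in> reach N'"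
    using reach_finish_nth[OF reach(1) _ k] reach_finish_nth[OF reach(2) _ k'] st
    by (auto simp: stmarks_def t_def t'_def V_def V'_def)
  moreover have "((\<lambda>s. M s + post N t s), V) \<in> stmarks N" "((\<lambda>s. M' s + post N' t' s), V') \<in> stmarks N'"
    using stmarks_finish_nth[OF wf(1) st(1) k] stmarks_finish_nth[OF wf(2) st(2) k']
    by (simp_all add: t_def t'_def V_def V'_def)
  moreover have "map (lab N) V = map (lab N') V'"
    using labs by (metis map_append take_map drop_map V_def V'_def)
  ultimately show ?thesis
    unfolding st_coupling_def t_def t'_def V_def V'_def by blast
qed

lemma tau_steps_st_steps:
  "(tau_step N)\<^sup>*\<^sup>* M M1 \<Longrightarrow> (\<lambda>m m'. st_step N m Tau m')\<^sup>*\<^sup>* (M, U) (M1, U)"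
proof (induction rule: rtranclp_induct)
  case (step M1 M2)
  then show ?case
    by (simp add: st_step_def rtranclp.rtrancl_into_rtrancl)
qed simp

locale coupled_nets =
  fixes N :: "('s, 't, 'a) pnet" and N' :: "('s, 'u, 'a) pnet"
  assumes wf: "wf_net N" and wf': "wf_net N'" and plain': "plain N'"
    and visible_effects: "visible_effects_matched N N'"
    and coupled_progress: "\<And>M U M' U'. ((M, U), (M', U')) \<in> st_coupling N N' \<Longrightarrow>
                              \<not> tau_divergent N M \<and> visible_enabling_matches N N' M M'"
begin

lemma st_coupling_wait:
  assumes coupled: "((M, U), (M', U')) \<in> st_coupling N N'" and en: "enabled_lab N' M' (Some a)"
  obtains Mk where "(\<lambda>m m'. st_step N m Tau m')\<^sup>*\<^sup>* (M, U) (Mk, U)"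
    "((Mk, U), (M', U')) \<in> st_coupling N N'" "enabled_lab N Mk (Some a)"
proof -
  let ?X = "{M. ((M, U), (M', U')) \<in> st_coupling N N'}"
  have "\<exists>Mk. (tau_step N)\<^sup>*\<^sup>* M Mk \<and> Mk \<in> ?X \<and> enabled_lab N Mk (Some a)"
  proof (rule reaches_goal_if_no_divergence)
    show "M \<in> ?X"
      using coupled by simp
    show "M2 \<in> ?X" if "M1 \<in> ?X" "tau_step N M1 M2" for M1 M2
      using st_coupling_tau[OF wf] that by simp
    show "enabled_lab N M1 (Some a) \<or> (\<exists>M2. tau_step N M1 M2)" if "M1 \<in> ?X" for M1
    proof -
      have "enabled_lab N M1 (Some a) \<or> enabled_lab N M1 None"
        using coupled_progress[of M1 U M' U'] that en by (simp add: visible_enabling_matches_def)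
      then show ?thesis
        by (auto simp: enabled_lab_def tau_step_def)
    qed
    show "\<not> (\<exists>f. f 0 = M1 \<and> (\<forall>i. tau_step N (f i) (f (Suc i))))" if "M1 \<in> ?X" for M1
      using coupled_progress[of M1 U M' U'] that by (simp add: tau_divergent_def)
  qed
  then show thesis
    using that tau_steps_st_steps by blast
qed

lemma st_coupling_forth:
  assumes coupled: "((M, U), (M', U')) \<in> st_coupling N N'" and step: "st_step N (M, U) al m1"
  shows "\<exists>m2. (st_step N' (M', U') al m2 \<or> al = Tau \<and> m2 = (M', U')) \<and> (m1, m2) \<in> st_coupling N N'"
proof (cases al)
  case (Start a)
  then obtain t where t: "t \<in> trans N" "lab N t = Some a" "pre N t \<le> M"
    and m1: "m1 = ((\<lambda>s. M s - pre N t s), U @ [t])"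
    using step by (auto simp: st_step_def)
  obtain t' where t': "t' \<in> trans N'" "lab N' t' = Some a" "pre N' t' \<le> M'"
    using coupled_progress[OF coupled] t by (auto simp: visible_enabling_matches_def enabled_lab_def)
  show ?thesis
    using st_coupling_start[OF coupled t(1,3) t'(1,3)] t t' m1 Start by (auto simp: st_step_def)
next
  case (Fin a n)
  then obtain k where k: "n = Suc k" "k < length U" "lab N (U ! k) = Some a"
    and m1: "m1 = ((\<lambda>s. M s + post N (U ! k) s), take k U @ drop (Suc k) U)"
    using step by (cases n) (auto simp: st_step_def)
  have "k < length U'" "lab N' (U' ! k) = Some a"
    using st_coupling_labels[OF coupled] k by (metis length_map, metis length_map nth_map)
  then show ?thesis
    using st_coupling_finish[OF wf wf' plain' visible_effects coupled k(2)] k(1) m1 Fin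
    by (auto simp: st_step_def)
next
  case Tau
  then show ?thesis
    using step st_coupling_tau[OF wf coupled] by (cases m1) (auto simp: st_step_def)
qed

lemma st_coupling_back:
  assumes coupled: "((M, U), (M', U')) \<in> st_coupling N N'" and step: "st_step N' (M', U') al m2"
  shows "\<exists>m1d m1. (\<lambda>m m'. st_step N m Tau m')\<^sup>*\<^sup>* (M, U) m1d \<and> st_step N m1d al m1 \<and>
                  (m1d, (M', U')) \<in> st_coupling N N' \<and> (m1, m2) \<in> st_coupling N N'"
proof (cases al)
  case (Start a)
  then obtain t' where t': "t' \<in> trans N'" "lab N' t' = Some a" "pre N' t' \<le> M'"
    and m2: "m2 = ((\<lambda>s. M' s - pre N' t' s), U' @ [t'])"
    using step by (auto simp: st_step_def)
  \<comment> \<open>\<open>N\<close> may first have to perform silent steps; they terminate because no coupled marking diverges\<close>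
  obtain Mk where Mk: "(\<lambda>m m'. st_step N m Tau m')\<^sup>*\<^sup>* (M, U) (Mk, U)"
      "((Mk, U), (M', U')) \<in> st_coupling N N'" "enabled_lab N Mk (Some a)"
    using st_coupling_wait[OF coupled] t' unfolding enabled_lab_def by blast
  then obtain t where t: "t \<in> trans N" "lab N t = Some a" "pre N t \<le> Mk"
    unfolding enabled_lab_def by blast
  have "st_step N (Mk, U) al ((\<lambda>s. Mk s - pre N t s), U @ [t])"
    using t Start by (auto simp: st_step_def)
  then show ?thesis
    using st_coupling_start[OF Mk(2) t(1,3) t'(1,3)] Mk(1,2) t(2) t'(2) m2 by auto
next
  case (Fin a n)
  then obtain k where k: "n = Suc k" "k < length U'" "lab N' (U' ! k) = Some a"
    and m2: "m2 = ((\<lambda>s. M' s + post N' (U' ! k) s), take k U' @ drop (Suc k) U')"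
    using step by (cases n) (auto simp: st_step_def)
  have "k < length U" "lab N (U ! k) = Some a"
    using st_coupling_labels[OF coupled] k by (metis length_map, metis length_map nth_map)
  then have "st_step N (M, U) al ((\<lambda>s. M s + post N (U ! k) s), take k U @ drop (Suc k) U)"
    using k(1) Fin by (simp add: st_step_def)
  then show ?thesis
    using st_coupling_finish[OF wf wf' plain' visible_effects coupled \<open>k < length U\<close>] coupled m2
    by blast
next
  case Tau
  then show ?thesis
    using step plain_no_tau_step[OF plain'] by (simp add: st_step_def)
qed

lemma bb_half_st_coupling: "bb_half (st_step N) (st_step N') Tau (st_coupling N N')"
  unfolding bb_half_def
proof (intro conjI allI impI)
  fix m1 m2 al m1'
  assume step: "(m1, m2) \<in> st_coupling N N' \<and> st_step N m1 al m1'"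
  then show "\<exists>m2d m2'. (\<lambda>x y. st_step N' x Tau y)\<^sup>*\<^sup>* m2 m2d \<and>
               (st_step N' m2d al m2' \<or> al = Tau \<and> m2' = m2d) \<and>
               (m1, m2d) \<in> st_coupling N N' \<and> (m1', m2') \<in> st_coupling N N'"
  proof -
    obtain M U M' U' where m: "m1 = (M, U)" "m2 = (M', U')"
      by fastforce
    then show ?thesis
      using st_coupling_forth[of M U M' U' al m1'] step by blast
  qed
next
  fix m1 m2 f
  assume "(m1, m2) \<in> st_coupling N N' \<and> f 0 = m1 \<and> (\<forall>i. st_step N (f i) Tau (f (Suc i))) \<and>
          (\<forall>i. (f i, m2) \<in> st_coupling N N')"
  then have "tau_divergent N (fst m1)" "\<not> tau_divergent N (fst m1)"
    using coupled_progress[of "fst m1" "snd m1" "fst m2" "snd m2"]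
    by (auto simp: tau_divergent_def st_step_def intro!: exI[of _ "\<lambda>i. fst (f i)"])
  then show "\<exists>g. g 0 = m2 \<and> (\<forall>i. st_step N' (g i) Tau (g (Suc i))) \<and> (\<forall>i j. (f i, g j) \<in> st_coupling N N')"
    by contradiction
qed

lemma bb_half_st_coupling_converse: "bb_half (st_step N') (st_step N) Tau ((st_coupling N N')\<inverse>)"
  unfolding bb_half_def
proof (intro conjI allI impI)
  fix m2 m1 al m2'
  assume step: "(m2, m1) \<in> (st_coupling N N')\<inverse> \<and> st_step N' m2 al m2'"
  then show "\<exists>m1d m1'. (\<lambda>x y. st_step N x Tau y)\<^sup>*\<^sup>* m1 m1d \<and>
               (st_step N m1d al m1' \<or> al = Tau \<and> m1' = m1d) \<and>
               (m2, m1d) \<in> (st_coupling N N')\<inverse> \<and> (m2', m1') \<in> (st_coupling N N')\<inverse>"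
  proof -
    obtain M U M' U' where m: "m1 = (M, U)" "m2 = (M', U')"
      by fastforce
    then show ?thesis
      using st_coupling_back[of M U M' U' al m2'] step by blast
  qed
next
  fix m2 m1 f
  assume "(m2, m1) \<in> (st_coupling N N')\<inverse> \<and> f 0 = m2 \<and> (\<forall>i. st_step N' (f i) Tau (f (Suc i))) \<and>
          (\<forall>i. (f i, m1) \<in> (st_coupling N N')\<inverse>)"
  then show "\<exists>g. g 0 = m1 \<and> (\<forall>i. st_step N (g i) Tau (g (Suc i))) \<and> (\<forall>i j. (f i, g j) \<in> (st_coupling N N')\<inverse>)"
    using plain_no_tau_step[OF plain'] by (simp add: st_step_def)
qed

theorem bSTb_div_coupled: "bSTb_div N N'"
  unfolding bSTb_div_def
  using st_coupling_subset st_coupling_init[OF wf wf'] bb_half_st_coupling bb_half_st_coupling_converse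
  by blast

end

theorem lemma6p4:
  fixes N :: "('s, 't, 'a) pnet" and N' :: "('s, 'u, 'a) pnet"
  assumes wfN: "wf_net N" and wfN': "wf_net N'" and plainN': "plain N'"
    and sub: "places N' \<subseteq> places N"
    and initN': "\<forall>s. init N' s = (if s \<in> places N' then init N s else 0)"
    and cond1: "\<forall>t\<in>trans N. lab N t \<noteq> None \<longrightarrow>
       (\<exists>t'\<in>trans N'. lab N' t' = lab N t \<and>
          (\<exists>G :: 't \<Rightarrow> nat. fin_ms N G \<and> lab_empty N (\<lambda>x. int (G x)) \<and>
             (\<lambda>s. int (post N' t' s) - int (pre N' t' s)) =
             effZ N (\<lambda>x. int (G x) + (if x = t then 1 else 0))))"
    and cond2: "\<forall>(G :: 't \<Rightarrow> int) (M' :: 's \<Rightarrow> nat) (U' :: 'u \<Rightarrow> nat) (U :: 't \<Rightarrow> nat) (M :: 's \<Rightarrow> nat).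
       fin_ms N G \<and> lab_empty N G \<and>
       (\<forall>s. s \<notin> places N' \<longrightarrow> M' s = 0) \<and> fin_ms N' U' \<and> fin_ms N U \<and>
       (\<forall>al. labcnt N' (\<lambda>x. int (U' x)) al = labcnt N (\<lambda>x. int (U x)) al) \<and>
       (\<lambda>s. M' s + preN N' U' s) \<in> reach N' \<and>
       (\<forall>s. int (M s) = int (M' s) + int (preN N' U' s) + (int (init N s) - int (init N' s))
                         + effZ N G s - int (preN N U s)) \<and>
       (\<lambda>s. M s + preN N U s) \<in> reach N
       \<longrightarrow>
       (\<not> (\<exists>f. f 0 = M \<and> (\<forall>i. tau_step N (f i) (f (Suc i))))) \<and>
       (\<forall>a. enabled_lab N' M' (Some a) \<longrightarrow> enabled_lab N M (Some a) \<or> enabled_lab N M None) \<and>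
       (\<forall>a. enabled_lab N M (Some a) \<longrightarrow> enabled_lab N' M' (Some a))"
  shows "bSTb_div N N'"
proof -
  have visible: "visible_effects_matched N N'"
    using cond1 unfolding visible_effects_matched_def .
  have progress: "\<not> tau_divergent N M \<and> visible_enabling_matches N N' M M'"
    if coupled: "((M, U), (M', U')) \<in> st_coupling N N'" for M U M' U'
  proof -
    obtain G where "consistent_markings N N' G M (count_list U) M' (count_list U')"
      using st_coupling_consistent[OF coupled] .
    then show ?thesis
      using cond2[rule_format, of G M' "count_list U'" "count_list U" M]
      unfolding consistent_markings_def marking_balance_def tau_divergent_def
        visible_enabling_matches_def
      by blast
  qed
  interpret coupled_nets N N'
    using wfN wfN' plainN' visible progress by unfold_locales
  show ?thesis
    by (rule bSTb_div_coupled)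
qed

end
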